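(* Consider the following game over slots $1,\dots,T$ with $N\ge2$ users. The BS chooses a pmf $\mathbf p$ and in every slot, independently, schedules user $i$ with probability $p_i$. The adversary chooses a blocking matrix $\sigma\in\{0,1\}^{N\times T}$, where $\sigma_i(t)=0$ means user $i$ is blocked in slot $t$. Feasibility means $\sum_{i,t}(1-\sigma_i(t))\le\alpha T$ and at most one user is blocked per slot, where $0<\alpha<1$. Ages satisfy $a_i(1)=1$ and $a_i(t+1)=1$ if user $i$ is scheduled and not blocked in slot $t$, and $a_i(t+1)=a_i(t)+1$ otherwise. The payoff is $\Delta^{\mathbf p,\sigma}=\frac1T\sum_{t=1}^T\frac1N\sum_i\mathbb E[a_i(t)]$. Let $\bar{\mathbf p}$ be the uniform pmf ($p_i=\frac1N$). Let $\bar\sigma$ block one arbitrary user exactly in the slots $\frac{(1-\alpha)T}{2}+1,\dots,\frac{(1+\alpha)T}2$ and nothing else. Then, for all sufficiently large $T$ with $\alpha T\in\mathbb Z$ and $(1-\alpha)T$ even, $(\bar{\mathbf p},\bar\sigma)$ is a Stackelberg equilibrium with the BS as leader. That is: - $\bar\sigma$ maximizes $\Delta^{\bar{\mathbf p},\sigma}$ over feasible $\sigma$; and - $\bar{\mathbf p}$ minimizes $\max_{\sigma\text{ feasible}}\Delta^{\mathbf p,\sigma}$ over all pmfs $\mathbf p$. *)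

theory Defs
  imports "HOL-Probability.Probability"
begin

text \<open>Users are 0,...,N-1; slots are 1,...,T.
  A schedule u maps each slot t to the scheduled user u t.
  A blocking matrix is sigma :: nat => nat => bool, where sigma i t = True
  means sigma_i(t) = 1 (not blocked) and False means user i is blocked in slot t.\<close>

fun age :: "(nat \<Rightarrow> nat) \<Rightarrow> (nat \<Rightarrow> nat \<Rightarrow> bool) \<Rightarrow> nat \<Rightarrow> nat \<Rightarrow> nat" where
  "age u \<sigma> i 0 = 1"
| "age u \<sigma> i (Suc 0) = 1"
| "age u \<sigma> i (Suc (Suc t)) =
     (if u (Suc t) = i \<and> \<sigma> i (Suc t) then 1 else age u \<sigma> i (Suc t) + 1)"

definition sched :: "nat \<Rightarrow> nat pmf \<Rightarrow> (nat \<Rightarrow> nat) pmf" where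
  "sched T p = Pi_pmf {1..T} 0 (\<lambda>_. p)"

definition payoff :: "nat \<Rightarrow> nat \<Rightarrow> nat pmf \<Rightarrow> (nat \<Rightarrow> nat \<Rightarrow> bool) \<Rightarrow> real" where
  "payoff N T p \<sigma> =
     (1 / real T) * (\<Sum>t=1..T. (1 / real N) *
        (\<Sum>i<N. measure_pmf.expectation (sched T p) (\<lambda>u. real (age u \<sigma> i t))))"

definition feasible :: "nat \<Rightarrow> nat \<Rightarrow> real \<Rightarrow> (nat \<Rightarrow> nat \<Rightarrow> bool) \<Rightarrow> bool" where
  "feasible N T \<alpha> \<sigma> \<longleftrightarrow>
     real (card {(i, t). i < N \<and> t \<in> {1..T} \<and> \<not> \<sigma> i t}) \<le> \<alpha> * real T
   \<and> (\<forall>t\<in>{1..T}. card {i. i < N \<and> \<not> \<sigma> i t} \<le> 1)"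

definition worst_payoff :: "nat \<Rightarrow> nat \<Rightarrow> real \<Rightarrow> nat pmf \<Rightarrow> real" where
  "worst_payoff N T \<alpha> p = Sup {payoff N T p \<sigma> | \<sigma>. feasible N T \<alpha> \<sigma>}"

definition uniform_pmf :: "nat \<Rightarrow> nat pmf" where
  "uniform_pmf N = pmf_of_set {..<N}"

definition sigma_bar :: "nat \<Rightarrow> real \<Rightarrow> nat \<Rightarrow> nat \<Rightarrow> nat \<Rightarrow> bool" where
  "sigma_bar T \<alpha> j i t \<longleftrightarrow>
     \<not> (i = j \<and> (1 - \<alpha>) * real T / 2 + 1 \<le> real t \<and> real t \<le> (1 + \<alpha>) * real T / 2)"

end

theory Submission
  imports Defs
begin

text \<open>
  Write \<open>q\<^sub>i = 1 - p\<^sub>i\<close> and \<open>B\<^sub>i\<close> for the slots in which user \<open>i\<close> is blocked. User \<open>i\<close>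
  has age at least \<open>t - a + 1\<close> at time \<open>t\<close> iff it is not served in \<open>[a, t)\<close>, which has probability
  \<open>q\<^sub>i\<close> raised to the number of unblocked slots of \<open>[a, t)\<close>. Hence the payoff is an average of
  the quantities \<open>age_sum q\<^sub>i B\<^sub>i T\<close>, and three properties of \<open>age_sum\<close> give the equilibrium.

  \<^item> For one user, among blocking sets of at most \<open>m = \<alpha>T\<close> slots the contiguous block in the
    middle of the horizon maximises \<open>age_sum\<close>. Symmetrised, \<open>age_sum\<close> is a double sum of
    \<open>q^|\<phi> c - \<phi> c'|\<close>, where \<open>\<phi> c\<close> counts the unblocked slots up to \<open>c\<close>. The unblocked
    slots contribute a term depending only on \<open>|B|\<close>, and each blocked slot contributes a row
    sum of the kernel \<open>q^|k - l|\<close>, which is largest at the centre.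
  \<^item> On disjoint sets \<open>age_sum q\<close> is supermodular, because \<open>x + y \<le> 1 + x y\<close> for
    \<open>x, y \<le> 1\<close>. So against the uniform pmf the adversary gains nothing by spreading its
    budget over several users.
  \<^item> \<open>age_sum\<close> is convex in \<open>q\<close>. By Jensen's inequality, averaging over the user that
    \<open>sigma_bar\<close> blocks shows that every pmf does at least as badly as the uniform one.
\<close>

lemma add_le_one_plus_mult:
  fixes x y :: "'a :: linordered_idom"
  assumes "x \<le> 1" "y \<le> 1"
  shows "x + y \<le> 1 + x * y"
proof -
  have "0 \<le> (1 - x) * (1 - y)"
    using assms by simp
  then show ?thesis
    by (simp add: algebra_simps)
qed

lemma balanced_powers_le:
  fixes q :: real
  assumes "0 \<le> q" "q \<le> 1" "j \<le> L"
  shows "q ^ L + q ^ Suc L \<le> q ^ j + q ^ (2 * L + 1 - j)"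
proof -
  obtain d where L: "L = j + d"
    using assms(3) le_Suc_ex by blast
  have "q ^ j * (q ^ d + q ^ Suc d) \<le> q ^ j * (1 + q ^ d * q ^ Suc d)"
    using assms by (intro mult_left_mono add_le_one_plus_mult power_le_one) auto
  moreover have "q ^ L = q ^ j * q ^ d" "q ^ Suc L = q ^ j * q ^ Suc d"
    unfolding L by (simp_all only: power_add add_Suc_right[symmetric])
  moreover have "q ^ (2 * L + 1 - j) = q ^ j * (q ^ d * q ^ Suc d)"
  proof -
    have "2 * L + 1 - j = j + (d + Suc d)"
      using L by linarith
    then show ?thesis
      by (simp only: power_add)
  qed
  ultimately show ?thesis
    by (simp only: distrib_left mult_1_right)
qed

lemma sum_square_symmetric:
  fixes f :: "nat \<Rightarrow> nat \<Rightarrow> 'a :: comm_ring_1"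
  assumes "\<And>x y. f x y = f y x"
  shows "(\<Sum>c\<in>{0..n}. \<Sum>c'\<in>{0..n}. f c c') =
         2 * (\<Sum>c'\<in>{0..n}. \<Sum>c\<in>{0..c'}. f c c') - (\<Sum>c\<in>{0..n}. f c c)"
proof (induction n)
  case 0
  then show ?case by simp
next
  case (Suc n)
  have "(\<Sum>c\<in>{0..Suc n}. \<Sum>c'\<in>{0..Suc n}. f c c') =
        (\<Sum>c\<in>{0..n}. \<Sum>c'\<in>{0..n}. f c c') + (\<Sum>c\<in>{0..n}. f c (Suc n))
          + (\<Sum>c'\<in>{0..n}. f (Suc n) c') + f (Suc n) (Suc n)"
    by (simp add: sum.distrib)
  also have "(\<Sum>c'\<in>{0..n}. f (Suc n) c') = (\<Sum>c\<in>{0..n}. f c (Suc n))"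
    using assms by simp
  finally show ?case
    using Suc by simp
qed

lemma sum_if_eq_single:
  fixes u v :: real
  assumes "finite A" "i \<in> A"
  shows "(\<Sum>j\<in>A. if j = i then u else v) = u + (real (card A) - 1) * v"
proof -
  have "1 \<le> card A"
    using assms by (auto simp: Suc_le_eq card_gt_0_iff)
  then show ?thesis
    using assms by (simp add: sum.remove[of A i] of_nat_diff algebra_simps)
qed

lemma ex_ge_average:
  fixes f :: "'a \<Rightarrow> real" and c :: real
  assumes "finite A" "A \<noteq> {}" "card A * c \<le> (\<Sum>i\<in>A. f i)"
  obtains j where "j \<in> A" "c \<le> f j"
proof -
  have "\<exists>j\<in>A. c \<le> f j"
  proof (rule ccontr)
    assume "\<not> (\<exists>j\<in>A. c \<le> f j)"
    then have "(\<Sum>i\<in>A. f i) < (\<Sum>i\<in>A. c)"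
      using assms(1,2) by (intro sum_strict_mono) auto
    then show False
      using assms(3) by simp
  qed
  then show ?thesis
    using that by blast
qed

lemma card_mult_power_le_sum_power:
  fixes x :: "'a \<Rightarrow> real" and c :: real
  assumes A: "finite A" "A \<noteq> {}" and x: "\<And>i. i \<in> A \<Longrightarrow> 0 \<le> x i"
    and mean: "(\<Sum>i\<in>A. x i) = card A * c"
  shows "card A * c ^ n \<le> (\<Sum>i\<in>A. x i ^ n)"
proof -
  have "convex_on {0..} (\<lambda>y::real. y ^ n)"
    by (cases "even n") (auto intro: convex_power_odd convex_on_subset[OF convex_power_even])
  then have "(\<Sum>i\<in>A. (1 / card A) *\<^sub>R x i) ^ n \<le> (\<Sum>i\<in>A. (1 / card A) * x i ^ n)"
    using A x by (intro convex_on_sum) auto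
  moreover have "(\<Sum>i\<in>A. (1 / card A) *\<^sub>R x i) = c"
    using mean A by (simp add: sum_divide_distrib[symmetric])
  ultimately have "c ^ n \<le> (\<Sum>i\<in>A. x i ^ n) / card A"
    by (simp add: sum_divide_distrib)
  then show ?thesis
    using A by (simp add: pos_le_divide_eq card_gt_0_iff mult.commute)
qed

section \<open>Expected ages\<close>

definition age_sum :: "real \<Rightarrow> nat set \<Rightarrow> nat \<Rightarrow> real" where
  "age_sum q B T = (\<Sum>t\<in>{1..T}. \<Sum>a\<in>{1..t}. q ^ card ({a..<t} - B))"

lemma age_eq_sum_unserved:
  "real (age u \<sigma> i (Suc t)) =
     (\<Sum>a\<in>{1..Suc t}. of_bool (\<forall>s\<in>{a..<Suc t}. \<not> (u s = i \<and> \<sigma> i s)))"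
proof (induction t)
  case 0
  then show ?case by simp
next
  case (Suc t)
  let ?served = "u (Suc t) = i \<and> \<sigma> i (Suc t)"
  let ?unserved = "\<lambda>a b. \<forall>s\<in>{a..<b}. \<not> (u s = i \<and> \<sigma> i s)"
  have step: "?unserved a (Suc (Suc t)) \<longleftrightarrow> ?unserved a (Suc t) \<and> \<not> ?served" if "a \<le> Suc t" for a
    using that by (auto simp: less_Suc_eq)
  have "(\<Sum>a\<in>{1..Suc (Suc t)}. of_bool (?unserved a (Suc (Suc t))) :: real) =
        (\<Sum>a\<in>{1..Suc t}. of_bool (?unserved a (Suc (Suc t)))) + 1"
    by simp
  also have "\<dots> = (\<Sum>a\<in>{1..Suc t}. of_bool (?unserved a (Suc t) \<and> \<not> ?served)) + 1"
    using step by (intro arg_cong2[where f = "(+)"] sum.cong) auto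
  finally show ?case
    using Suc by (cases ?served) auto
qed

lemma prob_unserved:
  assumes "1 \<le> a" "t \<le> T"
  shows "measure_pmf.prob (sched T p) {u. \<forall>s\<in>{a..<t}. \<not> (u s = i \<and> \<sigma> i s)} =
         (1 - pmf p i) ^ card ({a..<t} - {s. \<not> \<sigma> i s})"
proof -
  let ?S = "{a..<t} - {s. \<not> \<sigma> i s}"
  let ?X = "\<lambda>s. if s \<in> ?S then UNIV - {i} else UNIV"
  have "{u. \<forall>s\<in>{a..<t}. \<not> (u s = i \<and> \<sigma> i s)} = Pi {1..T} ?X"
    using assms by (auto simp: Pi_def)
  then have "measure_pmf.prob (sched T p) {u. \<forall>s\<in>{a..<t}. \<not> (u s = i \<and> \<sigma> i s)} =
             (\<Prod>s\<in>{1..T}. measure_pmf.prob p (?X s))"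
    unfolding sched_def by (simp add: measure_Pi_pmf_Pi)
  also have "\<dots> = (\<Prod>s\<in>{1..T}. if s \<in> ?S then 1 - pmf p i else 1)"
    using measure_pmf.prob_compl[of "{i}" p] by (intro prod.cong) (auto simp: measure_pmf_single)
  also have "\<dots> = (\<Prod>s\<in>{1..T} \<inter> ?S. 1 - pmf p i)"
    by (rule prod.inter_restrict[symmetric]) simp
  also have "{1..T} \<inter> ?S = ?S"
    using assms by auto
  finally show ?thesis
    by simp
qed

lemma expectation_age:
  assumes "t \<in> {1..T}"
  shows "measure_pmf.expectation (sched T p) (\<lambda>u. real (age u \<sigma> i t)) =
         (\<Sum>a\<in>{1..t}. (1 - pmf p i) ^ card ({a..<t} - {s. \<not> \<sigma> i s}))"
proof -
  obtain t' where t': "t = Suc t'"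
    using assms by (cases t) auto
  let ?A = "\<lambda>a. {u. \<forall>s\<in>{a..<t}. \<not> (u s = i \<and> \<sigma> i s)}"
  have "integrable (measure_pmf (sched T p)) (indicator (?A a) :: _ \<Rightarrow> real)" for a
    by (auto intro!: integrable_real_indicator simp: measure_pmf.emeasure_finite less_top[symmetric])
  moreover have "real (age u \<sigma> i t) = (\<Sum>a\<in>{1..t}. indicator (?A a) u)" for u
    by (simp only: t' age_eq_sum_unserved indicator_def mem_Collect_eq)
  ultimately have "measure_pmf.expectation (sched T p) (\<lambda>u. real (age u \<sigma> i t)) =
             (\<Sum>a\<in>{1..t}. measure_pmf.prob (sched T p) (?A a))"
    by (simp add: Bochner_Integration.integral_sum)
  also have "\<dots> = (\<Sum>a\<in>{1..t}. (1 - pmf p i) ^ card ({a..<t} - {s. \<not> \<sigma> i s}))"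
    using assms by (intro sum.cong refl prob_unserved) auto
  finally show ?thesis .
qed

lemma payoff_eq_age_sum:
  "payoff N T p \<sigma> = (1 / (real T * real N)) * (\<Sum>i<N. age_sum (1 - pmf p i) {s. \<not> \<sigma> i s} T)"
proof -
  have "payoff N T p \<sigma> = (1 / real T) * (\<Sum>t\<in>{1..T}. (1 / real N) *
          (\<Sum>i<N. \<Sum>a\<in>{1..t}. (1 - pmf p i) ^ card ({a..<t} - {s. \<not> \<sigma> i s})))"
    unfolding payoff_def by (intro arg_cong2[where f = "(*)"] refl sum.cong) (auto simp: expectation_age)
  also have "\<dots> = (1 / (real T * real N)) * (\<Sum>i<N. age_sum (1 - pmf p i) {s. \<not> \<sigma> i s} T)"
    unfolding age_sum_def by (simp add: sum_distrib_left, rule sum.swap)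
  finally show ?thesis .
qed

section \<open>Monotonicity, supermodularity and convexity of age_sum\<close>

lemma age_sum_mono:
  fixes q :: real
  assumes "0 \<le> q" "q \<le> 1" "B \<subseteq> B'"
  shows "age_sum q B T \<le> age_sum q B' T"
  unfolding age_sum_def
proof (intro sum_mono)
  fix t a
  have "card ({a..<t} - B') \<le> card ({a..<t} - B)"
    using assms(3) by (intro card_mono) auto
  then show "q ^ card ({a..<t} - B) \<le> q ^ card ({a..<t} - B')"
    using assms(1,2) by (rule power_decreasing)
qed

lemma age_sum_restrict:
  assumes "{1..T - 1} \<subseteq> S"
  shows "age_sum q (B \<inter> S) T = age_sum q B T"
  unfolding age_sum_def
proof (intro sum.cong refl)
  fix t a
  assume "t \<in> {1..T}" "a \<in> {1..t}"
  then have "{a..<t} \<subseteq> {1..T - 1}"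
    by auto
  then have "{a..<t} \<subseteq> S"
    using assms by blast
  then have "{a..<t} - (B \<inter> S) = {a..<t} - B"
    by blast
  then show "q ^ card ({a..<t} - (B \<inter> S)) = q ^ card ({a..<t} - B)"
    by simp
qed

lemma age_sum_union_disjoint_le:
  fixes q :: real
  assumes q: "0 \<le> q" "q \<le> 1" and disjoint: "B1 \<inter> B2 = {}"
  shows "age_sum q B1 T + age_sum q B2 T \<le> age_sum q (B1 \<union> B2) T + age_sum q {} T"
proof -
  have pointwise: "q ^ card (I - B1) + q ^ card (I - B2) \<le> q ^ card (I - (B1 \<union> B2)) + q ^ card (I - {})"
    if "finite I" for I :: "nat set"
  proof -
    let ?free = "card (I - (B1 \<union> B2))"
    have split: "I - B1 = (I - (B1 \<union> B2)) \<union> (I \<inter> B2)" "I - B2 = (I - (B1 \<union> B2)) \<union> (I \<inter> B1)"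
      using disjoint by auto
    have card_Diff1: "card (I - B1) = ?free + card (I \<inter> B2)"
      unfolding split using that by (intro card_Un_disjoint) auto
    have card_Diff2: "card (I - B2) = ?free + card (I \<inter> B1)"
      unfolding split using that by (intro card_Un_disjoint) auto
    have card_I: "card I = ?free + card (I \<inter> B1) + card (I \<inter> B2)"
      using card_Int_Diff[OF that, of B1] card_Diff1 by simp
    have "q ^ card (I \<inter> B1) + q ^ card (I \<inter> B2) \<le> 1 + q ^ card (I \<inter> B1) * q ^ card (I \<inter> B2)"
      using q by (intro add_le_one_plus_mult power_le_one)
    then have "q ^ ?free * (q ^ card (I \<inter> B1) + q ^ card (I \<inter> B2))
               \<le> q ^ ?free * (1 + q ^ card (I \<inter> B1) * q ^ card (I \<inter> B2))"
      using q by (intro mult_left_mono) auto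
    then show ?thesis
      unfolding card_Diff1 card_Diff2 card_I Diff_empty by (simp add: power_add algebra_simps)
  qed
  show ?thesis
    unfolding age_sum_def sum.distrib[symmetric] by (intro sum_mono pointwise finite_atLeastLessThan)
qed

lemma age_sum_UN_disjoint_le:
  fixes q :: real
  assumes q: "0 \<le> q" "q \<le> 1" and "finite I" "disjoint_family_on B I"
  shows "(\<Sum>i\<in>I. age_sum q (B i) T) + age_sum q {} T
         \<le> age_sum q (\<Union>i\<in>I. B i) T + card I * age_sum q {} T"
  using assms(3,4)
proof (induction I rule: finite_induct)
  case empty
  then show ?case by simp
next
  case (insert j I)
  have "B j \<inter> (\<Union>i\<in>I. B i) = {}"
    using insert.prems insert.hyps(2) unfolding disjoint_family_on_def by auto
  then have "age_sum q (B j) T + age_sum q (\<Union>i\<in>I. B i) T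
             \<le> age_sum q (B j \<union> (\<Union>i\<in>I. B i)) T + age_sum q {} T"
    by (rule age_sum_union_disjoint_le[OF q])
  moreover have "disjoint_family_on B I"
    using insert.prems by (rule disjoint_family_on_mono[rotated]) auto
  ultimately show ?case
    using insert.IH insert.hyps by (simp add: algebra_simps)
qed

lemma card_mult_age_sum_le_sum:
  fixes x :: "'a \<Rightarrow> real" and c :: real
  assumes "finite A" "A \<noteq> {}" "\<And>i. i \<in> A \<Longrightarrow> 0 \<le> x i" "(\<Sum>i\<in>A. x i) = card A * c"
  shows "card A * age_sum c B T \<le> (\<Sum>i\<in>A. age_sum (x i) B T)"
proof -
  have "card A * age_sum c B T = (\<Sum>t\<in>{1..T}. \<Sum>a\<in>{1..t}. card A * c ^ card ({a..<t} - B))"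
    unfolding age_sum_def by (simp add: sum_distrib_left)
  also have "\<dots> \<le> (\<Sum>t\<in>{1..T}. \<Sum>a\<in>{1..t}. \<Sum>i\<in>A. x i ^ card ({a..<t} - B))"
    using assms by (intro sum_mono card_mult_power_le_sum_power)
  also have "\<dots> = (\<Sum>i\<in>A. age_sum (x i) B T)"
    unfolding age_sum_def by (simp add: sum.swap[of _ A])
  finally show ?thesis .
qed

lemma sum_single_target_age_sum_ge:
  fixes x :: "nat \<Rightarrow> real" and c :: real
  assumes N: "0 < N" and x: "\<And>i. 0 \<le> x i" and mean: "(\<Sum>i<N. x i) = N * c"
  shows "real N * (age_sum c B T + (real N - 1) * age_sum c {} T)
         \<le> (\<Sum>j<N. \<Sum>i<N. age_sum (x i) (if i = j then B else {}) T)"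
proof -
  have row: "(\<Sum>j<N. age_sum (x i) (if i = j then B else {}) T) =
             age_sum (x i) B T + (real N - 1) * age_sum (x i) {} T" if "i < N" for i
  proof -
    have "(\<Sum>j<N. age_sum (x i) (if i = j then B else {}) T) =
          (\<Sum>j<N. if j = i then age_sum (x i) B T else age_sum (x i) {} T)"
      by (intro sum.cong) auto
    then show ?thesis
      using that by (simp add: sum_if_eq_single)
  qed
  have "real N * (age_sum c B T + (real N - 1) * age_sum c {} T) =
        real N * age_sum c B T + (real N - 1) * (real N * age_sum c {} T)"
    by (simp add: algebra_simps)
  also have "\<dots> \<le> (\<Sum>i<N. age_sum (x i) B T) + (real N - 1) * (\<Sum>i<N. age_sum (x i) {} T)"
    using card_mult_age_sum_le_sum[of "{..<N}" x c] N x mean by (intro add_mono mult_left_mono) auto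
  also have "\<dots> = (\<Sum>i<N. \<Sum>j<N. age_sum (x i) (if i = j then B else {}) T)"
    using row by (simp add: sum.distrib sum_distrib_left)
  also have "\<dots> = (\<Sum>j<N. \<Sum>i<N. age_sum (x i) (if i = j then B else {}) T)"
    by (rule sum.swap)
  finally show ?thesis .
qed

section \<open>The middle block is the worst blocking set of a single user\<close>

definition nat_dist :: "nat \<Rightarrow> nat \<Rightarrow> nat" where
  "nat_dist a b = (if a \<le> b then b - a else a - b)"

lemma nat_dist_commute: "nat_dist a b = nat_dist b a"
  unfolding nat_dist_def by auto

definition unblocked_count :: "nat \<Rightarrow> nat set \<Rightarrow> nat \<Rightarrow> nat" where
  "unblocked_count M B c = card (({1..M} - B) \<inter> {1..c})"

lemma unblocked_count_le:
  assumes "B \<subseteq> {1..M}"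
  shows "unblocked_count M B c \<le> M - card B"
proof -
  have "unblocked_count M B c \<le> card ({1..M} - B)"
    unfolding unblocked_count_def by (intro card_mono) auto
  also have "\<dots> = M - card B"
    using assms by (simp add: card_Diff_subset finite_subset)
  finally show ?thesis .
qed

lemma unblocked_count_middle_block:
  assumes "Suc M = 2 * L + m" "c \<in> {L + 1..L + m}"
  shows "unblocked_count M {L + 1..L + m} c = L"
proof -
  have "({1..M} - {L + 1..L + m}) \<inter> {1..c} = {1..L}"
    using assms by auto
  then show ?thesis
    unfolding unblocked_count_def by simp
qed

lemma age_sum_Suc_eq:
  "age_sum q B (Suc M) =
     (\<Sum>c'\<in>{0..M}. \<Sum>c\<in>{0..c'}. q ^ nat_dist (unblocked_count M B c) (unblocked_count M B c'))"
proof -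
  have "age_sum q B (Suc M) = (\<Sum>c'\<in>{0..M}. \<Sum>a\<in>{1..Suc c'}. q ^ card ({a..<Suc c'} - B))"
    unfolding age_sum_def by (subst sum.shift_bounds_cl_Suc_ivl[symmetric]) simp
  also have "\<dots> = (\<Sum>c'\<in>{0..M}. \<Sum>c\<in>{0..c'}. q ^ card ({Suc c..<Suc c'} - B))"
    by (subst sum.shift_bounds_cl_Suc_ivl[symmetric]) simp
  also have "\<dots> = (\<Sum>c'\<in>{0..M}. \<Sum>c\<in>{0..c'}.
                      q ^ nat_dist (unblocked_count M B c) (unblocked_count M B c'))"
  proof (intro sum.cong refl)
    fix c' c
    assume "c' \<in> {0..M}" "c \<in> {0..c'}"
    then have "{Suc c..<Suc c'} - B = (({1..M} - B) \<inter> {1..c'}) - (({1..M} - B) \<inter> {1..c})"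
      and "({1..M} - B) \<inter> {1..c} \<subseteq> ({1..M} - B) \<inter> {1..c'}" and "c \<le> c'"
      by auto
    then show "q ^ card ({Suc c..<Suc c'} - B) =
               q ^ nat_dist (unblocked_count M B c) (unblocked_count M B c')"
      unfolding nat_dist_def unblocked_count_def
      by (simp add: card_Diff_subset card_mono)
  qed
  finally show ?thesis .
qed

lemma twice_age_sum_eq:
  "2 * age_sum q B (Suc M) =
     (\<Sum>c\<in>{0..M}. \<Sum>c'\<in>{0..M}. q ^ nat_dist (unblocked_count M B c) (unblocked_count M B c'))
       + (M + 1)"
  unfolding age_sum_Suc_eq by (subst sum_square_symmetric) (simp_all add: nat_dist_commute nat_dist_def)

lemma bij_betw_unblocked_count:
  assumes "B \<subseteq> {1..M}"
  shows "bij_betw (unblocked_count M B) ({0..M} - B) {0..M - card B}"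
proof -
  have finite_B: "finite B"
    using assms by (rule finite_subset) simp
  have inj: "inj_on (unblocked_count M B) ({0..M} - B)"
  proof (rule linorder_inj_onI')
    fix i j
    assume "i \<in> {0..M} - B" "j \<in> {0..M} - B" "i < j"
    then have "j \<in> ({1..M} - B) \<inter> {1..j}" "j \<notin> ({1..M} - B) \<inter> {1..i}"
      and "({1..M} - B) \<inter> {1..i} \<subseteq> ({1..M} - B) \<inter> {1..j}"
      by auto
    then have "({1..M} - B) \<inter> {1..i} \<subset> ({1..M} - B) \<inter> {1..j}"
      by blast
    then have "card (({1..M} - B) \<inter> {1..i}) < card (({1..M} - B) \<inter> {1..j})"
      by (intro psubset_card_mono) auto
    then show "unblocked_count M B i \<noteq> unblocked_count M B j"
      unfolding unblocked_count_def by simp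
  qed
  have "card B \<le> M"
    using card_mono[OF _ assms] by simp
  moreover have "card ({0..M} - B) = Suc M - card B"
    using assms finite_B by (subst card_Diff_subset) auto
  ultimately have "card (unblocked_count M B ` ({0..M} - B)) = card {0..M - card B}"
    using card_image[OF inj] by simp
  moreover have "unblocked_count M B ` ({0..M} - B) \<subseteq> {0..M - card B}"
    using unblocked_count_le[OF assms] by auto
  ultimately have "unblocked_count M B ` ({0..M} - B) = {0..M - card B}"
    by (intro card_subset_eq) auto
  then show ?thesis
    using inj unfolding bij_betw_def by simp
qed

definition kernel_row :: "real \<Rightarrow> nat \<Rightarrow> nat \<Rightarrow> real" where
  "kernel_row q e k = (\<Sum>l\<in>{0..e}. q ^ nat_dist k l)"

lemma double_sum_unblocked_split:
  assumes "B \<subseteq> {1..M}"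
  shows "(\<Sum>c\<in>{0..M}. \<Sum>c'\<in>{0..M}. q ^ nat_dist (unblocked_count M B c) (unblocked_count M B c')) =
         (\<Sum>k\<in>{0..M - card B}. kernel_row q (M - card B) k)
           + 2 * (\<Sum>c\<in>B. kernel_row q (M - card B) (unblocked_count M B c))
           + (\<Sum>c\<in>B. \<Sum>c'\<in>B. q ^ nat_dist (unblocked_count M B c) (unblocked_count M B c'))"
proof -
  define U where "U = {0..M} - B"
  define e where "e = M - card B"
  define h where "h = (\<lambda>c c'. q ^ nat_dist (unblocked_count M B c) (unblocked_count M B c'))"
  have finite_B: "finite B"
    using assms by (rule finite_subset) simp
  have split: "{0..M} = U \<union> B" "U \<inter> B = {}" "finite U"
    using assms unfolding U_def by auto
  have bij: "bij_betw (unblocked_count M B) U {0..e}"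
    unfolding U_def e_def by (rule bij_betw_unblocked_count[OF assms])
  have row: "(\<Sum>c'\<in>U. h c c') = kernel_row q e (unblocked_count M B c)" for c
    unfolding h_def kernel_row_def using sum.reindex_bij_betw[OF bij] by simp
  have "(\<Sum>c\<in>{0..M}. \<Sum>c'\<in>{0..M}. h c c') =
        (\<Sum>c\<in>U. \<Sum>c'\<in>U. h c c') + (\<Sum>c\<in>U. \<Sum>c'\<in>B. h c c')
          + ((\<Sum>c\<in>B. \<Sum>c'\<in>U. h c c') + (\<Sum>c\<in>B. \<Sum>c'\<in>B. h c c'))"
    unfolding split(1) using split(2,3) finite_B by (simp add: sum.union_disjoint sum.distrib)
  also have "(\<Sum>c\<in>U. \<Sum>c'\<in>B. h c c') = (\<Sum>c\<in>B. \<Sum>c'\<in>U. h c c')"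
    by (subst sum.swap) (simp add: h_def nat_dist_commute)
  also have "(\<Sum>c\<in>U. \<Sum>c'\<in>U. h c c') = (\<Sum>k\<in>{0..e}. kernel_row q e k)"
    unfolding row using sum.reindex_bij_betw[OF bij, of "kernel_row q e"] by simp
  also have "(\<Sum>c\<in>B. \<Sum>c'\<in>U. h c c') = (\<Sum>c\<in>B. kernel_row q e (unblocked_count M B c))"
    unfolding row ..
  finally show ?thesis
    unfolding h_def e_def by simp
qed

lemma kernel_row_closed_form:
  fixes q :: real
  assumes "k \<le> e"
  shows "(1 - q) * kernel_row q e k = 1 + q - q ^ Suc k - q ^ Suc (e - k)"
  using assms
proof (induction e rule: dec_induct)
  case base
  have "kernel_row q k k = (\<Sum>l\<le>k. q ^ l)"
    unfolding kernel_row_def nat_dist_def atLeast0AtMost[symmetric]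
    by (subst sum.atLeastAtMost_rev) (auto intro: sum.cong)
  then show ?case
    by (simp add: sum_gp_basic)
next
  case (step e)
  then have "kernel_row q (Suc e) k = kernel_row q e k + q ^ Suc (e - k)"
    unfolding kernel_row_def nat_dist_def by (simp add: Suc_diff_le)
  then show ?case
    using step by (simp add: algebra_simps Suc_diff_le)
qed

lemma kernel_row_le_centre:
  fixes q :: real
  assumes q: "0 \<le> q" "q < 1" and L: "1 \<le> L" and k: "k \<le> 2 * L - 1"
  shows "kernel_row q (2 * L - 1) k \<le> kernel_row q (2 * L - 1) L"
proof -
  have key: "q ^ L + q ^ Suc L \<le> q ^ Suc k + q ^ Suc (2 * L - 1 - k)"
  proof (cases "k < L")
    case True
    then have "q ^ L + q ^ Suc L \<le> q ^ Suc k + q ^ (2 * L + 1 - Suc k)"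
      using q by (intro balanced_powers_le) auto
    also have "2 * L + 1 - Suc k = Suc (2 * L - 1 - k)"
      using True by linarith
    finally show ?thesis .
  next
    case False
    then have "Suc (2 * L - 1 - k) \<le> L"
      using L by linarith
    then have "q ^ L + q ^ Suc L \<le> q ^ Suc (2 * L - 1 - k) + q ^ (2 * L + 1 - Suc (2 * L - 1 - k))"
      using q by (intro balanced_powers_le) auto
    also have "2 * L + 1 - Suc (2 * L - 1 - k) = Suc k"
      using k L by linarith
    finally show ?thesis
      by linarith
  qed
  have "(1 - q) * kernel_row q (2 * L - 1) k = 1 + q - q ^ Suc k - q ^ Suc (2 * L - 1 - k)"
    using k by (rule kernel_row_closed_form)
  moreover have "(1 - q) * kernel_row q (2 * L - 1) L = 1 + q - q ^ Suc L - q ^ Suc (2 * L - 1 - L)"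
    using L by (intro kernel_row_closed_form) linarith
  moreover have "Suc (2 * L - 1 - L) = L"
    using L by linarith
  ultimately have "(1 - q) * kernel_row q (2 * L - 1) k \<le> (1 - q) * kernel_row q (2 * L - 1) L"
    using key by (simp only:)
  then show ?thesis
    by (rule mult_left_le_imp_le) (use q in simp)
qed

lemma double_sum_unblocked_le:
  fixes q :: real
  assumes q: "0 \<le> q" "q < 1" and L: "1 \<le> L" and M: "Suc M = 2 * L + m"
    and B: "B \<subseteq> {1..M}" "card B = m"
  shows "(\<Sum>c\<in>{0..M}. \<Sum>c'\<in>{0..M}. q ^ nat_dist (unblocked_count M B c) (unblocked_count M B c'))
         \<le> (\<Sum>k\<in>{0..2 * L - 1}. kernel_row q (2 * L - 1) k)
             + 2 * (m * kernel_row q (2 * L - 1) L) + m * m"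
proof -
  have e: "M - card B = 2 * L - 1"
    using M L B(2) by simp
  have "kernel_row q (2 * L - 1) (unblocked_count M B c) \<le> kernel_row q (2 * L - 1) L" for c
    using kernel_row_le_centre[OF q L] unblocked_count_le[OF B(1), of c] e by simp
  then have rows: "(\<Sum>c\<in>B. kernel_row q (2 * L - 1) (unblocked_count M B c))
                   \<le> real (card B) * kernel_row q (2 * L - 1) L"
    by (rule sum_bounded_above)
  have "(\<Sum>c'\<in>B. q ^ nat_dist (unblocked_count M B c) (unblocked_count M B c')) \<le> real (card B)" for c
    using sum_bounded_above[of B "\<lambda>c'. q ^ nat_dist (unblocked_count M B c) (unblocked_count M B c')" 1]
      q by (simp add: power_le_one)
  then have block: "(\<Sum>c\<in>B. \<Sum>c'\<in>B. q ^ nat_dist (unblocked_count M B c) (unblocked_count M B c'))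
                    \<le> real (card B) * real (card B)"
    by (rule sum_bounded_above)
  show ?thesis
    using double_sum_unblocked_split[OF B(1), of q] rows block e B(2) by simp
qed

lemma double_sum_unblocked_middle_block:
  fixes q :: real
  assumes L: "1 \<le> L" and M: "Suc M = 2 * L + m"
  shows "(\<Sum>c\<in>{0..M}. \<Sum>c'\<in>{0..M}.
            q ^ nat_dist (unblocked_count M {L + 1..L + m} c) (unblocked_count M {L + 1..L + m} c'))
         = (\<Sum>k\<in>{0..2 * L - 1}. kernel_row q (2 * L - 1) k)
             + 2 * (m * kernel_row q (2 * L - 1) L) + m * m"
proof -
  have "{L + 1..L + m} \<subseteq> {1..M}"
    using M L by auto
  moreover have "M - card {L + 1..L + m} = 2 * L - 1"
    using M L by simp
  moreover have "unblocked_count M {L + 1..L + m} c = L" if "c \<in> {L + 1..L + m}" for c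
    using M that by (rule unblocked_count_middle_block)
  then have "(\<Sum>c\<in>{L + 1..L + m}. kernel_row q (2 * L - 1) (unblocked_count M {L + 1..L + m} c))
             = m * kernel_row q (2 * L - 1) L"
    and "(\<Sum>c\<in>{L + 1..L + m}. \<Sum>c'\<in>{L + 1..L + m}.
            q ^ nat_dist (unblocked_count M {L + 1..L + m} c) (unblocked_count M {L + 1..L + m} c'))
         = m * m"
    by (simp_all add: nat_dist_def)
  ultimately show ?thesis
    using double_sum_unblocked_split[of "{L + 1..L + m}" M q] by simp
qed

lemma age_sum_le_middle_block_of_card:
  fixes q :: real
  assumes q: "0 \<le> q" "q < 1" and L: "1 \<le> L" and T: "T = 2 * L + m"
    and B: "B \<subseteq> {1..T - 1}" "card B = m"
  shows "age_sum q B T \<le> age_sum q {L + 1..L + m} T"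
proof -
  define M where "M = T - 1"
  have M: "T = Suc M" "Suc M = 2 * L + m"
    using T L unfolding M_def by simp_all
  have "2 * age_sum q B T \<le> 2 * age_sum q {L + 1..L + m} T"
    unfolding M(1) twice_age_sum_eq
    using double_sum_unblocked_le[OF q L M(2)] double_sum_unblocked_middle_block[OF L M(2)] B M_def
    by simp
  then show ?thesis
    by simp
qed

lemma age_sum_le_middle_block:
  fixes q :: real
  assumes q: "0 \<le> q" "q < 1" and L: "1 \<le> L" and T: "T = 2 * L + m"
    and B: "B \<subseteq> {1..T}" "card B \<le> m"
  shows "age_sum q B T \<le> age_sum q {L + 1..L + m} T"
proof -
  let ?B = "B \<inter> {1..T - 1}"
  have "card ?B \<le> m"
    using B card_mono[of B ?B] finite_subset[OF B(1)] by fastforce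
  moreover have "card ({1..T - 1} - ?B) = T - 1 - card ?B"
    by (simp add: card_Diff_subset)
  ultimately have "m - card ?B \<le> card ({1..T - 1} - ?B)"
    using T L by linarith
  then obtain D where D: "D \<subseteq> {1..T - 1} - ?B" "card D = m - card ?B" "finite D"
    by (rule obtain_subset_with_card_n)
  have "age_sum q B T = age_sum q ?B T"
    by (simp add: age_sum_restrict)
  also have "\<dots> \<le> age_sum q (?B \<union> D) T"
    using q by (intro age_sum_mono) auto
  also have "\<dots> \<le> age_sum q {L + 1..L + m} T"
  proof (rule age_sum_le_middle_block_of_card[OF q L T])
    show "?B \<union> D \<subseteq> {1..T - 1}"
      using D by auto
    show "card (?B \<union> D) = m"
      using D \<open>card ?B \<le> m\<close> by (subst card_Un_disjoint) auto
  qed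
  finally show ?thesis .
qed

lemma sum_age_sum_le_middle_block:
  fixes q :: real
  assumes q: "0 \<le> q" "q < 1" and L: "1 \<le> L" and T: "T = 2 * L + m"
    and I: "finite I" and disjoint: "disjoint_family_on B I"
    and B: "(\<Union>i\<in>I. B i) \<subseteq> {1..T}" "card (\<Union>i\<in>I. B i) \<le> m"
  shows "(\<Sum>i\<in>I. age_sum q (B i) T)
         \<le> age_sum q {L + 1..L + m} T + (real (card I) - 1) * age_sum q {} T"
  using age_sum_UN_disjoint_le[OF q(1) _ I disjoint, of T] age_sum_le_middle_block[OF q L T B] q
  by (simp add: algebra_simps)

lemma pmf_uniform_pmf: "i < N \<Longrightarrow> pmf (uniform_pmf N) i = 1 / real N"
  unfolding uniform_pmf_def by (subst pmf_of_set) auto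

lemma feasible_disjoint_blocked:
  assumes "feasible N T \<alpha> \<sigma>"
  shows "disjoint_family_on (\<lambda>i. {t. \<not> \<sigma> i t} \<inter> {1..T}) {..<N}"
  unfolding disjoint_family_on_def
proof (intro ballI impI)
  fix i i'
  assume i: "i \<in> {..<N}" "i' \<in> {..<N}" "i \<noteq> i'"
  show "({t. \<not> \<sigma> i t} \<inter> {1..T}) \<inter> ({t. \<not> \<sigma> i' t} \<inter> {1..T}) = {}"
  proof (rule equals0I)
    fix t
    assume "t \<in> ({t. \<not> \<sigma> i t} \<inter> {1..T}) \<inter> ({t. \<not> \<sigma> i' t} \<inter> {1..T})"
    then have t: "t \<in> {1..T}" "{i, i'} \<subseteq> {x. x < N \<and> \<not> \<sigma> x t}"
      using i by auto
    then have "card {i, i'} \<le> card {x. x < N \<and> \<not> \<sigma> x t}"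
      by (intro card_mono) auto
    also have "\<dots> \<le> 1"
      using assms t(1) unfolding feasible_def by blast
    finally show False
      using i(3) by simp
  qed
qed

lemma feasible_card_blocked_le:
  assumes "feasible N T \<alpha> \<sigma>"
  shows "real (card (\<Union>i<N. {t. \<not> \<sigma> i t} \<inter> {1..T})) \<le> \<alpha> * real T"
proof -
  let ?P = "{(i, t). i < N \<and> t \<in> {1..T} \<and> \<not> \<sigma> i t}"
  have "finite ?P"
    by (rule finite_subset[of _ "{..<N} \<times> {1..T}"]) auto
  moreover have "(\<Union>i<N. {t. \<not> \<sigma> i t} \<inter> {1..T}) = snd ` ?P"
    by force
  ultimately have "card (\<Union>i<N. {t. \<not> \<sigma> i t} \<inter> {1..T}) \<le> card ?P"
    by (simp add: card_image_le)
  then show ?thesis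
    using assms unfolding feasible_def by linarith
qed

lemma bdd_above_payoffs: "bdd_above {payoff N T p \<sigma> | \<sigma>. feasible N T \<alpha> \<sigma>}"
proof (rule bdd_aboveI)
  fix y
  assume "y \<in> {payoff N T p \<sigma> | \<sigma>. feasible N T \<alpha> \<sigma>}"
  then obtain \<sigma> where y: "y = payoff N T p \<sigma>"
    by auto
  have "(\<Sum>i<N. age_sum (1 - pmf p i) {s. \<not> \<sigma> i s} T) \<le> (\<Sum>i<N. age_sum (1 - pmf p i) UNIV T)"
    by (intro sum_mono age_sum_mono) (auto simp: pmf_le_1)
  then show "y \<le> (1 / (real T * real N)) * (\<Sum>i<N. age_sum (1 - pmf p i) UNIV T)"
    unfolding y payoff_eq_age_sum by (intro mult_left_mono) auto
qed

lemma payoff_le_worst_payoff: "feasible N T \<alpha> \<sigma> \<Longrightarrow> payoff N T p \<sigma> \<le> worst_payoff N T \<alpha> p"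
  unfolding worst_payoff_def by (rule cSup_upper) (auto intro: bdd_above_payoffs)

lemma worst_payoff_le:
  assumes "feasible N T \<alpha> \<sigma>\<^sub>0" "\<And>\<sigma>. feasible N T \<alpha> \<sigma> \<Longrightarrow> payoff N T p \<sigma> \<le> v"
  shows "worst_payoff N T \<alpha> p \<le> v"
  unfolding worst_payoff_def using assms by (intro cSup_least) auto

context
  fixes T L m :: nat and \<alpha> :: real
  assumes L: "1 \<le> L" and L_eq: "real L = (1 - \<alpha>) * real T / 2" and m_eq: "real m = \<alpha> * real T"
begin

lemma horizon_eq: "T = 2 * L + m"
proof -
  have "real T = real (2 * L + m)"
    using L_eq m_eq by (simp add: algebra_simps)
  then show ?thesis
    by (simp only: of_nat_eq_iff)
qed

lemma sigma_bar_blocked: "{t. \<not> sigma_bar T \<alpha> j i t} = (if i = j then {L + 1..L + m} else {})"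
proof -
  have start: "(1 - \<alpha>) * real T / 2 + 1 = real (L + 1)"
    and stop: "(1 + \<alpha>) * real T / 2 = real (L + m)"
    using L_eq m_eq by (simp_all add: algebra_simps)
  show ?thesis
    unfolding sigma_bar_def start stop of_nat_le_iff by auto
qed

lemma feasible_sigma_bar:
  assumes "j < N"
  shows "feasible N T \<alpha> (sigma_bar T \<alpha> j)"
proof -
  have blocked: "\<not> sigma_bar T \<alpha> j i t \<longleftrightarrow> i = j \<and> t \<in> {L + 1..L + m}" for i t
    using sigma_bar_blocked[of j i] by (cases "i = j") (simp_all add: set_eq_iff)
  have "{(i, t). i < N \<and> t \<in> {1..T} \<and> \<not> sigma_bar T \<alpha> j i t} = {j} \<times> {L + 1..L + m}"
  proof -
    have "L + m \<le> T"
      using horizon_eq by simp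
    then show ?thesis
      unfolding blocked using assms by auto
  qed
  then have "real (card {(i, t). i < N \<and> t \<in> {1..T} \<and> \<not> sigma_bar T \<alpha> j i t}) \<le> \<alpha> * real T"
    by (simp add: card_cartesian_product flip: m_eq)
  moreover have "card {i. i < N \<and> \<not> sigma_bar T \<alpha> j i t} \<le> 1" for t
  proof -
    have "{i. i < N \<and> \<not> sigma_bar T \<alpha> j i t} \<subseteq> {j}"
      by (auto simp: blocked)
    then show ?thesis
      using card_mono[of "{j}"] by fastforce
  qed
  ultimately show ?thesis
    unfolding feasible_def by blast
qed

lemma payoff_sigma_bar:
  "payoff N T p (sigma_bar T \<alpha> j) =
     (1 / (real T * real N)) * (\<Sum>i<N. age_sum (1 - pmf p i) (if i = j then {L + 1..L + m} else {}) T)"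
  unfolding payoff_eq_age_sum sigma_bar_blocked ..

lemma payoff_uniform_sigma_bar:
  assumes "j < N"
  shows "payoff N T (uniform_pmf N) (sigma_bar T \<alpha> j) =
     (1 / (real T * real N)) * (age_sum (1 - 1 / N) {L + 1..L + m} T + (real N - 1) * age_sum (1 - 1 / N) {} T)"
proof -
  have "(\<Sum>i<N. age_sum (1 - pmf (uniform_pmf N) i) (if i = j then {L + 1..L + m} else {}) T) =
        (\<Sum>i<N. if i = j then age_sum (1 - 1 / N) {L + 1..L + m} T else age_sum (1 - 1 / N) {} T)"
    by (intro sum.cong) (auto simp: pmf_uniform_pmf)
  also have "\<dots> = age_sum (1 - 1 / N) {L + 1..L + m} T + (real N - 1) * age_sum (1 - 1 / N) {} T"
    using assms by (simp add: sum_if_eq_single)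
  finally show ?thesis
    unfolding payoff_sigma_bar by simp
qed

lemma payoff_uniform_le_sigma_bar:
  assumes "j < N" "feasible N T \<alpha> \<sigma>"
  shows "payoff N T (uniform_pmf N) \<sigma> \<le> payoff N T (uniform_pmf N) (sigma_bar T \<alpha> j)"
proof -
  let ?q = "1 - 1 / real N"
  let ?B = "\<lambda>i. {t. \<not> \<sigma> i t} \<inter> {1..T}"
  have q: "0 \<le> ?q" "?q < 1"
    using assms(1) by (auto simp: field_simps)
  have "(\<Sum>i<N. age_sum (1 - pmf (uniform_pmf N) i) {t. \<not> \<sigma> i t} T) = (\<Sum>i<N. age_sum ?q (?B i) T)"
    by (intro sum.cong refl) (simp add: pmf_uniform_pmf age_sum_restrict)
  also have "\<dots> \<le> age_sum ?q {L + 1..L + m} T + (real N - 1) * age_sum ?q {} T"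
  proof -
    have "card (\<Union>i<N. ?B i) \<le> m"
      using feasible_card_blocked_le[OF assms(2)] unfolding m_eq[symmetric] by simp
    moreover have "(\<Union>i<N. ?B i) \<subseteq> {1..T}"
      by auto
    ultimately show ?thesis
      using sum_age_sum_le_middle_block[OF q L horizon_eq _ feasible_disjoint_blocked[OF assms(2)]] by simp
  qed
  finally show ?thesis
    unfolding payoff_uniform_sigma_bar[OF assms(1)] unfolding payoff_eq_age_sum
    by (rule mult_left_mono) simp
qed

lemma sum_payoff_sigma_bar_ge:
  assumes "j < N" "set_pmf p \<subseteq> {..<N}"
  shows "real N * payoff N T (uniform_pmf N) (sigma_bar T \<alpha> j) \<le> (\<Sum>j'<N. payoff N T p (sigma_bar T \<alpha> j'))"
proof -
  let ?q = "1 - 1 / real N"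
  let ?M = "{L + 1..L + m}"
  have "(\<Sum>i<N. pmf p i) = 1"
    using assms(2) by (intro sum_pmf_eq_1) auto
  then have "(\<Sum>i<N. 1 - pmf p i) = N * ?q"
    using assms(1) by (simp add: sum_subtractf field_simps)
  then have "real N * (age_sum ?q ?M T + (real N - 1) * age_sum ?q {} T)
             \<le> (\<Sum>j'<N. \<Sum>i<N. age_sum (1 - pmf p i) (if i = j' then ?M else {}) T)"
    using assms(1) by (intro sum_single_target_age_sum_ge) (auto simp: pmf_le_1)
  then have "(1 / (real T * real N)) * (real N * (age_sum ?q ?M T + (real N - 1) * age_sum ?q {} T))
             \<le> (1 / (real T * real N)) * (\<Sum>j'<N. \<Sum>i<N. age_sum (1 - pmf p i) (if i = j' then ?M else {}) T)"
    by (intro mult_left_mono) auto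
  then show ?thesis
    unfolding payoff_uniform_sigma_bar[OF assms(1)] unfolding payoff_sigma_bar
    by (simp only: sum_distrib_left[symmetric] mult.left_commute[of "real N"])
qed

lemma worst_payoff_uniform_le:
  assumes "set_pmf p \<subseteq> {..<N}"
  shows "worst_payoff N T \<alpha> (uniform_pmf N) \<le> worst_payoff N T \<alpha> p"
proof -
  have N: "0 < N"
    using assms set_pmf_not_empty[of p] by fastforce
  obtain j where j: "j \<in> {..<N}" "payoff N T (uniform_pmf N) (sigma_bar T \<alpha> 0) \<le> payoff N T p (sigma_bar T \<alpha> j)"
    by (rule ex_ge_average[of "{..<N}" _ "\<lambda>j. payoff N T p (sigma_bar T \<alpha> j)"])
      (use sum_payoff_sigma_bar_ge[OF N assms] N in auto)
  have "worst_payoff N T \<alpha> (uniform_pmf N) \<le> payoff N T (uniform_pmf N) (sigma_bar T \<alpha> 0)"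
    using feasible_sigma_bar[OF N] payoff_uniform_le_sigma_bar[OF N] by (rule worst_payoff_le)
  also have "\<dots> \<le> payoff N T p (sigma_bar T \<alpha> j)"
    by (fact j(2))
  also have "\<dots> \<le> worst_payoff N T \<alpha> p"
    using feasible_sigma_bar j(1) by (intro payoff_le_worst_payoff) auto
  finally show ?thesis .
qed

end

lemma obtain_window_bounds:
  fixes \<alpha> :: real and T :: nat and k :: int
  assumes "0 < \<alpha>" "\<alpha> < 1" "1 \<le> T" "\<alpha> * real T \<in> \<int>" "(1 - \<alpha>) * real T = 2 * of_int k"
  obtains L m :: nat where "1 \<le> L" "real L = (1 - \<alpha>) * real T / 2" "real m = \<alpha> * real T"
proof -
  obtain z :: int where z: "\<alpha> * real T = of_int z"
    using assms(4) Ints_cases by metis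
  have "0 \<le> \<alpha> * real T" "0 < (1 - \<alpha>) * real T"
    using assms(1-3) by simp_all
  then have "0 \<le> z" "0 < k"
    using z assms(5) by simp_all
  then show ?thesis
    using z assms(5) by (intro that[of "nat k" "nat z"]) auto
qed

theorem theorem7:
  fixes N :: nat and \<alpha> :: real
  assumes "N \<ge> 2" and "0 < \<alpha>" and "\<alpha> < 1"
  shows "\<exists>T0. \<forall>T \<ge> T0. \<forall>j < N.
           (\<alpha> * real T \<in> \<int> \<and> (\<exists>k::int. (1 - \<alpha>) * real T = 2 * of_int k)) \<longrightarrow>
             feasible N T \<alpha> (sigma_bar T \<alpha> j)
           \<and> (\<forall>\<sigma>. feasible N T \<alpha> \<sigma> \<longrightarrow>
                  payoff N T (uniform_pmf N) \<sigma> \<le> payoff N T (uniform_pmf N) (sigma_bar T \<alpha> j))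
           \<and> (\<forall>p. set_pmf p \<subseteq> {..<N} \<longrightarrow>
                  worst_payoff N T \<alpha> (uniform_pmf N) \<le> worst_payoff N T \<alpha> p)"
proof (intro exI[of _ 1] allI impI)
  fix T j :: nat
  assume "1 \<le> T" and j: "j < N"
    and "\<alpha> * real T \<in> \<int> \<and> (\<exists>k::int. (1 - \<alpha>) * real T = 2 * of_int k)"
  then obtain L m where window: "1 \<le> L" "real L = (1 - \<alpha>) * real T / 2" "real m = \<alpha> * real T"
    using obtain_window_bounds assms(2,3) by metis
  show "feasible N T \<alpha> (sigma_bar T \<alpha> j)
        \<and> (\<forall>\<sigma>. feasible N T \<alpha> \<sigma> \<longrightarrow>
               payoff N T (uniform_pmf N) \<sigma> \<le> payoff N T (uniform_pmf N) (sigma_bar T \<alpha> j))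
        \<and> (\<forall>p. set_pmf p \<subseteq> {..<N} \<longrightarrow>
               worst_payoff N T \<alpha> (uniform_pmf N) \<le> worst_payoff N T \<alpha> p)"
    using feasible_sigma_bar[OF window j] payoff_uniform_le_sigma_bar[OF window j]
      worst_payoff_uniform_le[OF window] by blast
qed

end
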